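(* Let $\tau\in\mathbb N$ and let $f:\mathbb Z_+\times\mathbb R\to\mathbb R$, continuous in $x$, satisfy: (1) $f$ is asymptotically $\tau$-periodic in $t$ uniformly with respect to $x$ on compact subsets of $\mathbb R$; (2) every $g\in H^+(f)$ is strictly increasing in $x$: $v_1<v_2$ implies $g(t,v_1)<g(t,v_2)$ for all $t\in\mathbb Z_+$; (3) the solution $\varphi(t,u_0,f)$ of $x(t+1)=f(t,x(t))$, $x(0)=u_0$, is bounded on $\mathbb Z_+$. Then $\lim_{t\to+\infty}|\varphi(t+\tau,u_0,f)-\varphi(t,u_0,f)|=0$.
   Context: $C(\mathbb Z_+\times\mathbb R,\mathbb R)$ is the space of functions continuous in $x$, with the topology of uniform convergence on sets $\{t:|t|\le L\}\times K$, $K$ compact. $f^h(t,x)=f(t+h,x)$; $H^+(f)$ is the closure of $\{f^h:h\in\mathbb Z_+\}$. $f$ is asymptotically $\tau$-periodic: $f=P+R$ with $P(t+\tau,x)=P(t,x)$ and $R(t,x)\to0$ as $t\to\infty$ uniformly on compact $x$-sets. *)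

theory Defs
  imports "HOL-Analysis.Analysis"
begin

text \<open>Functions on Z_+ x R are modelled as nat => real => real.\<close>

definition cont_in_x :: "(nat \<Rightarrow> real \<Rightarrow> real) \<Rightarrow> bool" where
  "cont_in_x f \<longleftrightarrow> (\<forall>t. continuous_on UNIV (f t))"

definition shift :: "(nat \<Rightarrow> real \<Rightarrow> real) \<Rightarrow> nat \<Rightarrow> nat \<Rightarrow> real \<Rightarrow> real" where
  "shift f h = (\<lambda>t x. f (t + h) x)"

text \<open>H^+(f): closure of the positive translates of f in C(Z_+ x R, R) with the topology of
  uniform convergence on sets {t. t \<le> L} x K, K compact. A function g lies in the closure iff
  every basic neighbourhood of g meets the set of translates.\<close>
definition Hplus :: "(nat \<Rightarrow> real \<Rightarrow> real) \<Rightarrow> (nat \<Rightarrow> real \<Rightarrow> real) set" where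
  "Hplus f = {g. cont_in_x g \<and>
     (\<forall>L::nat. \<forall>K::real set. \<forall>\<epsilon>>0. compact K \<longrightarrow>
        (\<exists>h. \<forall>t\<le>L. \<forall>x\<in>K. \<bar>shift f h t x - g t x\<bar> < \<epsilon>))}"

definition asympt_periodic :: "nat \<Rightarrow> (nat \<Rightarrow> real \<Rightarrow> real) \<Rightarrow> bool" where
  "asympt_periodic \<tau> f \<longleftrightarrow> (\<exists>P R. (\<forall>t x. f t x = P t x + R t x) \<and>
     (\<forall>t x. P (t + \<tau>) x = P t x) \<and>
     (\<forall>K::real set. compact K \<longrightarrow>
        (\<forall>\<epsilon>>0. \<exists>T. \<forall>t\<ge>T. \<forall>x\<in>K. \<bar>R t x\<bar> < \<epsilon>)))"

primrec sol :: "nat \<Rightarrow> real \<Rightarrow> (nat \<Rightarrow> real \<Rightarrow> real) \<Rightarrow> real" where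
  "sol 0 u0 f = u0"
| "sol (Suc t) u0 f = f t (sol t u0 f)"

end

theory Submission
  imports Defs
begin

text \<open>Write the recursion as x(t+1) = P(t, x t) + R(t, x t) with P \<tau>-periodic and R vanishing
  uniformly on compacts; monotonicity and continuity of P are inherited from f by passing to the
  limit along the translates f(t + k\<tau>). Along times t_n \<equiv> s (mod \<tau>) with x(t_n) \<rightarrow> c, the orbit
  follows the purely periodic recursion, so x(t_n + \<tau>) \<rightarrow> \<Pi>(c) for the monotone period map \<Pi>
  of phase s. If x(t+\<tau>) - x(t) \<ge> \<delta> infinitely often, some phase and limit give
  \<Pi>(c) \<ge> c + \<delta>; then d = c + \<delta>/2 satisfies \<Pi>(d) > d, and a second compactness argument shows
  that eventually the orbit at phase s cannot fall from above d to below d within one period.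
  Since x(t_n + \<tau>) > d for large n, the orbit then stays above d at phase s, contradicting
  x(t_n) \<rightarrow> c < d. The reflected system y \<mapsto> -P(t, -y) gives the other inequality.\<close>

lemma periodic_add_mult:
  fixes \<tau> t k :: nat
  assumes "\<And>t. g (t + \<tau>) = g t"
  shows "g (t + k * \<tau>) = g t"
proof (induction k)
  case (Suc k)
  have "g (t + Suc k * \<tau>) = g (t + k * \<tau> + \<tau>)" by (simp add: algebra_simps)
  with Suc assms show ?case by simp
qed simp

lemma periodic_mod:
  fixes \<tau> :: nat
  assumes "\<And>t. g (t + \<tau>) = g t"
  shows "g t = g (t mod \<tau>)"
  using periodic_add_mult[of g \<tau> "t mod \<tau>" "t div \<tau>", OF assms] by simp

lemma residue_class_induct:
  fixes t0 t \<tau> :: nat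
  assumes "t0 \<le> t" "t mod \<tau> = t0 mod \<tau>" "S t0"
    and step: "\<And>t. t0 \<le> t \<Longrightarrow> t mod \<tau> = t0 mod \<tau> \<Longrightarrow> S t \<Longrightarrow> S (t + \<tau>)"
  shows "S t"
proof -
  obtain k where "t = t0 + \<tau> * k" using mod_eq_nat1E assms(1,2) by metis
  moreover have "S (t0 + \<tau> * k)" for k
  proof (induction k)
    case (Suc k)
    then show ?case using step[of "t0 + \<tau> * k"] by (simp add: algebra_simps)
  qed (use assms(3) in simp)
  ultimately show ?thesis by simp
qed

lemma frequently_in_residue_class:
  fixes \<tau> :: nat
  assumes "\<tau> > 0" "frequently Q sequentially"
  obtains s where "frequently (\<lambda>t. t mod \<tau> = s \<and> Q t) sequentially"
proof -
  have "frequently (\<lambda>t. \<exists>s\<in>{..<\<tau>}. t mod \<tau> = s \<and> Q t) sequentially"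
    using assms(2) by (rule frequently_elim1) (use assms(1) in auto)
  then have "\<exists>s\<in>{..<\<tau>}. frequently (\<lambda>t. t mod \<tau> = s \<and> Q t) sequentially"
    by (rule frequently_bex_finite[OF finite_lessThan])
  then show ?thesis using that by blast
qed

lemma frequently_strict_mono_subseq:
  assumes "frequently Q sequentially"
  obtains r :: "nat \<Rightarrow> nat" where "strict_mono r" "\<And>n. Q (r n)"
  using infinite_enumerate[of "{n. Q n}"] assms
  by (auto simp: frequently_cofinite[symmetric] cofinite_eq_sequentially)

lemma continuous_on_uniform_limit_on_compacts:
  fixes h :: "'a::heine_borel \<Rightarrow> 'b::metric_space"
  assumes "\<And>K. compact K \<Longrightarrow> uniform_limit K g h sequentially"
    and "\<And>k. continuous_on UNIV (g k)"
  shows "continuous_on UNIV h"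
proof -
  have "continuous_on (cball y 1) h" for y
    by (rule uniform_limit_theorem[OF _ assms(1)[OF compact_cball]])
      (auto intro!: always_eventually continuous_on_subset[OF assms(2)])
  then have ball: "continuous_on (ball y 1) h" for y
    by (rule continuous_on_subset) (rule ball_subset_cball)
  have "isCont h y" for y
    using ball[of y] by (rule continuous_on_interior) simp
  then show ?thesis by (simp add: continuous_at_imp_continuous_on)
qed

lemma mono_pointwise_limit:
  fixes h :: "real \<Rightarrow> real"
  assumes "\<And>y. (\<lambda>k. g k y) \<longlonglongrightarrow> h y" "\<And>k. mono (g k)"
  shows "mono h"
proof
  fix a b :: real assume "a \<le> b"
  then show "h a \<le> h b"
    using assms by (intro LIMSEQ_le[OF assms(1) assms(1)]) (auto dest: monoD)
qed

lemma uniform_limit_periodic_translates: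
  fixes \<tau> :: nat and P R :: "nat \<Rightarrow> 'a \<Rightarrow> 'b::real_normed_vector"
  assumes "\<tau> > 0" "\<And>t. P (t + \<tau>) = P t"
    and "uniform_limit K R (\<lambda>_. 0) sequentially"
  shows "uniform_limit K (\<lambda>k x. P (t + k * \<tau>) x + R (t + k * \<tau>) x) (P t) sequentially"
  unfolding uniform_limit_sequentially_iff
proof (intro allI impI)
  fix e :: real assume "e > 0"
  then obtain N where N: "\<And>n x. N \<le> n \<Longrightarrow> x \<in> K \<Longrightarrow> dist (R n x) 0 < e"
    using assms(3) unfolding uniform_limit_sequentially_iff by blast
  have "dist (P (t + k * \<tau>) x + R (t + k * \<tau>) x) (P t x) < e" if "N \<le> k" "x \<in> K" for k x
  proof -
    have "k \<le> k * \<tau>" using assms(1) by simp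
    with that(1) have "N \<le> t + k * \<tau>" by linarith
    then have "dist (R (t + k * \<tau>) x) 0 < e" using N[OF _ that(2)] by blast
    then show ?thesis using periodic_add_mult[of P, OF assms(2)] by (simp add: dist_norm)
  qed
  then show "\<exists>N. \<forall>k\<ge>N. \<forall>x\<in>K. dist (P (t + k * \<tau>) x + R (t + k * \<tau>) x) (P t x) < e"
    by blast
qed

lemma asympt_periodicE:
  assumes "asympt_periodic \<tau> f"
  obtains P R where "f = (\<lambda>t x. P t x + R t x)" "\<And>t. P (t + \<tau>) = P t"
    "\<And>K. compact K \<Longrightarrow> uniform_limit K R (\<lambda>_. 0) sequentially"
proof -
  obtain P R where f: "\<forall>t x. f t x = P t x + R t x" and P: "\<forall>t x. P (t + \<tau>) x = P t x"
    and R: "\<forall>K::real set. compact K \<longrightarrow> (\<forall>\<epsilon>>0. \<exists>T. \<forall>t\<ge>T. \<forall>x\<in>K. \<bar>R t x\<bar> < \<epsilon>)"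
    using assms unfolding asympt_periodic_def by blast
  show ?thesis
  proof (rule that)
    show "f = (\<lambda>t x. P t x + R t x)" using f by (intro ext) simp
    show "P (t + \<tau>) = P t" for t using P by (intro ext) simp
    show "uniform_limit K R (\<lambda>_. 0) sequentially" if "compact K" for K
    proof -
      have "\<forall>\<epsilon>>0. \<exists>T. \<forall>t\<ge>T. \<forall>x\<in>K. \<bar>R t x\<bar> < \<epsilon>" using R that by blast
      then show ?thesis unfolding uniform_limit_sequentially_iff dist_real_def by simp
    qed
  qed
qed

lemma self_in_Hplus: "cont_in_x f \<Longrightarrow> f \<in> Hplus f"
  unfolding Hplus_def shift_def by (auto intro!: exI[of _ 0])

text \<open>The state at phase s + j of the purely periodic recursion started in phase s;
  flow P s \<tau> is the period map of phase s.\<close>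

primrec flow :: "(nat \<Rightarrow> 'a \<Rightarrow> 'a) \<Rightarrow> nat \<Rightarrow> nat \<Rightarrow> 'a \<Rightarrow> 'a" where
  "flow P s 0 y = y"
| "flow P s (Suc j) y = P (s + j) (flow P s j y)"

lemma mono_flow:
  assumes "\<And>t. mono (P t)"
  shows "mono (flow P s j)"
  by (induction j) (simp_all add: mono_def assms[THEN monoD])

locale asymptotically_periodic_orbit =
  fixes \<tau> :: nat and P R :: "nat \<Rightarrow> real \<Rightarrow> real" and x :: "nat \<Rightarrow> real"
  assumes period_pos: "\<tau> > 0"
    and periodic: "\<And>t. P (t + \<tau>) = P t"
    and continuous: "\<And>t. continuous_on UNIV (P t)"
    and mono: "\<And>t. mono (P t)"
    and remainder_vanishes: "\<And>K. compact K \<Longrightarrow> uniform_limit K R (\<lambda>_. 0) sequentially"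
    and recursion: "\<And>t. x (Suc t) = P t (x t) + R t (x t)"
    and bounded_orbit: "bounded (range x)"
begin

lemma remainder_along_orbit:
  assumes "filterlim w at_top sequentially"
  shows "(\<lambda>n. R (w n) (x (w n))) \<longlonglongrightarrow> 0"
proof (rule tendstoI)
  fix e :: real assume "e > 0"
  have "compact (closure (range x))" using bounded_orbit by (rule compact_closure[THEN iffD2])
  then have "eventually (\<lambda>t. \<forall>y\<in>closure (range x). dist (R t y) 0 < e) sequentially"
    using remainder_vanishes \<open>e > 0\<close> by (blast dest: uniform_limitD)
  then have "eventually (\<lambda>n. \<forall>y\<in>closure (range x). dist (R (w n) y) 0 < e) sequentially"
    by (rule filterlim_iff[THEN iffD1, OF assms, rule_format])
  then show "eventually (\<lambda>n. dist (R (w n) (x (w n))) 0 < e) sequentially"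
    by eventually_elim (auto intro: closure_subset[THEN subsetD])
qed

lemma flow_limit:
  assumes "filterlim v at_top sequentially" "\<And>n. v n mod \<tau> = s"
    and "(\<lambda>n. x (v n)) \<longlonglongrightarrow> c"
  shows "(\<lambda>n. x (v n + j)) \<longlonglongrightarrow> flow P s j c"
proof (induction j)
  case (Suc j)
  have "P (v n + j) = P (s + j)" for n
    using periodic_mod[of P, OF periodic] assms(2) by (metis mod_add_left_eq)
  then have step: "x (Suc (v n + j)) = P (s + j) (x (v n + j)) + R (v n + j) (x (v n + j))" for n
    by (simp add: recursion)
  have "(\<lambda>n. P (s + j) (x (v n + j))) \<longlonglongrightarrow> P (s + j) (flow P s j c)"
    using continuous Suc.IH by (rule continuous_on_tendsto_compose) auto
  moreover have "filterlim (\<lambda>n. v n + j) at_top sequentially"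
    by (rule filterlim_compose[OF filterlim_add_const_nat_at_top assms(1)])
  then have "(\<lambda>n. R (v n + j) (x (v n + j))) \<longlonglongrightarrow> 0" by (rule remainder_along_orbit)
  ultimately have "(\<lambda>n. P (s + j) (x (v n + j)) + R (v n + j) (x (v n + j)))
      \<longlonglongrightarrow> P (s + j) (flow P s j c) + 0"
    by (rule tendsto_add)
  then show ?case by (simp add: step)
qed (use assms(3) in simp)

lemma convergent_orbit_subseq:
  assumes "frequently Q sequentially"
  obtains v c where "filterlim v at_top sequentially" "\<And>n. Q (v n)" "(\<lambda>n. x (v n)) \<longlonglongrightarrow> c"
proof -
  obtain r :: "nat \<Rightarrow> nat" where r: "strict_mono r" "\<And>n. Q (r n)"
    using assms by (rule frequently_strict_mono_subseq) blast
  have "bounded (range (x \<circ> r))" using bounded_orbit by (rule bounded_subset) auto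
  then obtain c r' where r': "strict_mono r'" "((x \<circ> r) \<circ> r') \<longlonglongrightarrow> c"
    using bounded_imp_convergent_subsequence by blast
  show ?thesis
  proof (rule that)
    show "filterlim (r \<circ> r') at_top sequentially"
      using r(1) r'(1) by (intro filterlim_subseq strict_mono_o)
    show "Q ((r \<circ> r') n)" for n using r(2) by simp
    show "(\<lambda>n. x ((r \<circ> r') n)) \<longlonglongrightarrow> c" using r'(2) by (simp add: comp_def)
  qed
qed

lemma eventually_stays_above:
  assumes "d < flow P s \<tau> d"
  shows "eventually (\<lambda>t. t mod \<tau> = s \<longrightarrow> d \<le> x t \<longrightarrow> d \<le> x (t + \<tau>)) sequentially"
proof (rule ccontr)
  assume "\<not> ?thesis"
  then have "frequently (\<lambda>t. t mod \<tau> = s \<and> d \<le> x t \<and> x (t + \<tau>) < d) sequentially"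
    by (simp add: not_eventually not_le)
  then obtain v c where v: "filterlim v at_top sequentially"
      "\<And>n. v n mod \<tau> = s \<and> d \<le> x (v n) \<and> x (v n + \<tau>) < d"
    and c: "(\<lambda>n. x (v n)) \<longlonglongrightarrow> c"
    by (rule convergent_orbit_subseq) blast
  have "d \<le> c" using c v(2) by (intro LIMSEQ_le_const) auto
  then have "flow P s \<tau> d \<le> flow P s \<tau> c" by (rule monoD[OF mono_flow[OF mono]])
  moreover have "(\<lambda>n. x (v n + \<tau>)) \<longlonglongrightarrow> flow P s \<tau> c"
    using v(2) by (intro flow_limit[OF v(1) _ c]) blast
  then have "flow P s \<tau> c \<le> d"
    using v(2) by (intro LIMSEQ_le_const2) (auto intro: less_imp_le)
  ultimately show False using assms by linarith
qed

lemma eventually_above_along: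
  assumes "d < flow P s \<tau> d" "filterlim v at_top sequentially" "\<And>n. v n mod \<tau> = s"
    and "frequently (\<lambda>n. d < x (v n + \<tau>)) sequentially"
  shows "eventually (\<lambda>n. d \<le> x (v n)) sequentially"
proof -
  obtain T where T: "\<And>t. T \<le> t \<Longrightarrow> t mod \<tau> = s \<Longrightarrow> d \<le> x t \<Longrightarrow> d \<le> x (t + \<tau>)"
    using eventually_stays_above[OF assms(1)] unfolding eventually_sequentially by blast
  have "frequently (\<lambda>n. d < x (v n + \<tau>) \<and> T \<le> v n) sequentially"
    using assms(4) filterlim_at_top[THEN iffD1, OF assms(2), rule_format, of T]
    by (rule frequently_eventually_frequently)
  then obtain n0 where n0: "d < x (v n0 + \<tau>)" "T \<le> v n0" by (blast dest: frequently_ex)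
  have above: "d \<le> x t" if "v n0 + \<tau> \<le> t" "t mod \<tau> = s" for t
  proof (rule residue_class_induct[OF that(1)])
    show "t mod \<tau> = (v n0 + \<tau>) mod \<tau>" using that(2) assms(3) by simp
    show "d \<le> x (v n0 + \<tau>)" using n0(1) by simp
    show "d \<le> x (t' + \<tau>)" if "v n0 + \<tau> \<le> t'" "t' mod \<tau> = (v n0 + \<tau>) mod \<tau>" "d \<le> x t'" for t'
      using T[of t'] that n0(2) assms(3) by simp
  qed
  show ?thesis
    using filterlim_at_top[THEN iffD1, OF assms(2), rule_format, of "v n0 + \<tau>"]
    by eventually_elim (use above assms(3) in blast)
qed

lemma eventually_increment_lt:
  assumes "\<delta> > 0"
  shows "eventually (\<lambda>t. x (t + \<tau>) - x t < \<delta>) sequentially"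
proof (rule ccontr)
  assume "\<not> ?thesis"
  then have "frequently (\<lambda>t. \<delta> \<le> x (t + \<tau>) - x t) sequentially"
    by (simp add: not_eventually not_less)
  then obtain s where "frequently (\<lambda>t. t mod \<tau> = s \<and> \<delta> \<le> x (t + \<tau>) - x t) sequentially"
    using period_pos by (blast elim: frequently_in_residue_class)
  then obtain v c where v: "filterlim v at_top sequentially"
      "\<And>n. v n mod \<tau> = s \<and> \<delta> \<le> x (v n + \<tau>) - x (v n)"
    and c: "(\<lambda>n. x (v n)) \<longlonglongrightarrow> c"
    by (rule convergent_orbit_subseq) blast
  have next_lim: "(\<lambda>n. x (v n + \<tau>)) \<longlonglongrightarrow> flow P s \<tau> c"
    using v(2) by (intro flow_limit[OF v(1) _ c]) blast
  have "(\<lambda>n. x (v n + \<tau>) - x (v n)) \<longlonglongrightarrow> flow P s \<tau> c - c"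
    using next_lim c by (rule tendsto_diff)
  then have "\<delta> \<le> flow P s \<tau> c - c" using v(2) by (intro LIMSEQ_le_const) auto
  then have gap: "c + \<delta> \<le> flow P s \<tau> c" by simp
  define d where "d = c + \<delta> / 2"
  have "c < d" using assms by (simp add: d_def)
  have "flow P s \<tau> c \<le> flow P s \<tau> d"
    using \<open>c < d\<close> by (intro monoD[OF mono_flow[OF mono]]) simp
  then have "d < flow P s \<tau> d" using gap assms by (simp add: d_def)
  moreover have "eventually (\<lambda>n. d < x (v n + \<tau>)) sequentially"
    using next_lim gap assms by (intro order_tendstoD(1)) (auto simp: d_def)
  ultimately have "eventually (\<lambda>n. d \<le> x (v n)) sequentially"
    using v by (intro eventually_above_along eventually_frequently) auto
  moreover have "eventually (\<lambda>n. x (v n) < d) sequentially"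
    using c \<open>c < d\<close> by (rule order_tendstoD(2))
  ultimately have "eventually (\<lambda>n. False) sequentially"
    by eventually_elim simp
  then show False by simp
qed

lemma reflected_orbit:
  "asymptotically_periodic_orbit \<tau> (\<lambda>t y. - P t (- y)) (\<lambda>t y. - R t (- y)) (\<lambda>t. - x t)"
proof
  show "(\<lambda>y. - P (t + \<tau>) (- y)) = (\<lambda>y. - P t (- y))" for t by (simp add: periodic)
  show "continuous_on UNIV (\<lambda>y. - P t (- y))" for t
    by (intro continuous_intros continuous_on_compose2[OF continuous]) auto
  show "mono (\<lambda>y. - P t (- y))" for t
    by (rule monoI) (simp add: monoD[OF mono])
  show "uniform_limit K (\<lambda>t y. - R t (- y)) (\<lambda>_. 0) sequentially" if "compact K" for K
  proof -
    have "uniform_limit K (\<lambda>t y. R t (- y)) (\<lambda>_. 0) sequentially"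
      using remainder_vanishes[OF compact_negations[OF that]] by (rule uniform_limit_compose') auto
    then show ?thesis using uniform_limit_uminus by fastforce
  qed
  show "bounded (range (\<lambda>t. - x t))"
    using bounded_orbit by (simp add: image_image[symmetric, of uminus x])
qed (simp_all add: period_pos recursion)

theorem increment_tendsto_zero: "(\<lambda>t. \<bar>x (t + \<tau>) - x t\<bar>) \<longlonglongrightarrow> 0"
proof (rule tendstoI)
  interpret reflected: asymptotically_periodic_orbit \<tau>
      "\<lambda>t y. - P t (- y)" "\<lambda>t y. - R t (- y)" "\<lambda>t. - x t"
    by (rule reflected_orbit)
  fix \<delta> :: real assume "\<delta> > 0"
  with eventually_increment_lt reflected.eventually_increment_lt
  have "eventually (\<lambda>t. x (t + \<tau>) - x t < \<delta>) sequentially"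
    and "eventually (\<lambda>t. - x (t + \<tau>) - - x t < \<delta>) sequentially"
    by blast+
  then show "eventually (\<lambda>t. dist \<bar>x (t + \<tau>) - x t\<bar> 0 < \<delta>) sequentially"
    by eventually_elim (simp add: dist_real_def abs_less_iff)
qed

end

theorem mainTheorem18:
  fixes \<tau> :: nat and f :: "nat \<Rightarrow> real \<Rightarrow> real" and u0 :: real
  assumes "cont_in_x f"
    and "asympt_periodic \<tau> f"
    and "\<forall>g\<in>Hplus f. \<forall>t v1 v2. v1 < v2 \<longrightarrow> g t v1 < g t v2"
    and "\<exists>M. \<forall>t. \<bar>sol t u0 f\<bar> \<le> M"
  shows "(\<lambda>t. \<bar>sol (t + \<tau>) u0 f - sol t u0 f\<bar>) \<longlonglongrightarrow> 0"
proof (cases "\<tau> = 0")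
  case True
  then show ?thesis by simp
next
  case False
  obtain P R where f: "f = (\<lambda>t x. P t x + R t x)" and periodic: "\<And>t. P (t + \<tau>) = P t"
    and vanishes: "\<And>K. compact K \<Longrightarrow> uniform_limit K R (\<lambda>_. 0) sequentially"
    using assms(2) by (rule asympt_periodicE) (rule that)
  have translates: "uniform_limit K (\<lambda>k. f (t + k * \<tau>)) (P t) sequentially" if "compact K" for K t
    using uniform_limit_periodic_translates[where P = P, OF _ periodic vanishes[OF that]] False
    by (simp add: f)
  have f_mono: "mono (f t)" for t
  proof (rule strict_mono_mono, rule strict_monoI)
    show "f t a < f t b" if "a < b" for a b
      using assms(3) self_in_Hplus[OF assms(1)] that by blast
  qed
  have "mono (P t)" for t
  proof (rule mono_pointwise_limit)
    show "(\<lambda>k. f (t + k * \<tau>) y) \<longlonglongrightarrow> P t y" for y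
      using translates[OF compact_sing] by (rule tendsto_uniform_limitI) simp
  qed (rule f_mono)
  moreover have "continuous_on UNIV (P t)" for t
    using assms(1) unfolding cont_in_x_def
    by (intro continuous_on_uniform_limit_on_compacts[OF translates]) auto
  moreover have "bounded (range (\<lambda>t. sol t u0 f))"
    using assms(4) by (auto simp: bounded_iff)
  ultimately interpret asymptotically_periodic_orbit \<tau> P R "\<lambda>t. sol t u0 f"
    by unfold_locales (use False periodic vanishes in \<open>simp_all add: f\<close>)
  show ?thesis by (rule increment_tendsto_zero)
qed

end
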